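(* Let $\varepsilon\in(0,1/2)$ and $p\ge1$. (i) If $(\mu_n)_n\subset\mathscr P(\mathbb R)$ is a tight sequence of atomless measures, then $\sup_n\operatorname{diam}(I_\varepsilon[\mu_n])<\infty$ and $\sup_n|X_{\mu_n}(s)|<\infty$ for every $s\in(0,1)$. (ii) For all atomless $\mu,\nu\in\mathscr P_p(\mathbb R)$, $$\left|\Big(\int_{I_\varepsilon[\mu]^c}|x|^p\,d\mu\Big)^{1/p}-\Big(\int_{I_\varepsilon[\nu]^c}|x|^p\,d\nu\Big)^{1/p}\right|\le\|X_\mu-X_\nu\|_{L^p([\varepsilon,1-\varepsilon]^c)},$$ where $[\varepsilon,1-\varepsilon]^c=(0,1)\setminus[\varepsilon,1-\varepsilon]$. In particular, if $\mu_n,\mu$ are atomless and $\mu_n\to\mu$ in $\mathbb W_p$, then $\lim_n\int_{I_\varepsilon[\mu_n]^c}|x|^p\,d\mu_n=\int_{I_\varepsilon[\mu]^c}|x|^p\,d\mu$.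
   Context: For $\mu\in\mathscr P(\mathbb R)$, $X_\mu(z)=\inf\{a\in\mathbb R:\mu(-\infty,a)>z\}$ for $z\in(0,1)$ is the quantile function, and $I_\varepsilon[\mu]=[X_\mu(\varepsilon),X_\mu(1-\varepsilon)]$. $\mathbb W_p$ is the $p$-Wasserstein distance. *)

theory Defs
  imports "HOL-Probability.Probability"
begin

definition quantile :: "real measure \<Rightarrow> real \<Rightarrow> real" where
  "quantile \<mu> z = Inf {a. measure \<mu> {..<a} > z}"

definition quantile_interval :: "real measure \<Rightarrow> real \<Rightarrow> real set" where
  "quantile_interval \<mu> \<epsilon> = {quantile \<mu> \<epsilon> .. quantile \<mu> (1 - \<epsilon>)}"

definition atomless :: "real measure \<Rightarrow> bool" where
  "atomless \<mu> \<longleftrightarrow> (\<forall>x. measure \<mu> {x} = 0)"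

definition Pp :: "real \<Rightarrow> real measure \<Rightarrow> bool" where
  "Pp p \<mu> \<longleftrightarrow> real_distribution \<mu> \<and> integrable \<mu> (\<lambda>x. \<bar>x\<bar> powr p)"

definition couplings :: "real measure \<Rightarrow> real measure \<Rightarrow> (real \<times> real) measure set" where
  "couplings \<mu> \<nu> = {\<pi>. prob_space \<pi> \<and> sets \<pi> = sets (borel :: (real \<times> real) measure) \<and>
      distr \<pi> borel fst = \<mu> \<and> distr \<pi> borel snd = \<nu>}"

text \<open>p-Wasserstein distance (finite for measures in P_p).\<close>
definition wasserstein :: "real \<Rightarrow> real measure \<Rightarrow> real measure \<Rightarrow> real" where
  "wasserstein p \<mu> \<nu> =
     enn2real (INF \<pi>\<in>couplings \<mu> \<nu>. \<integral>\<^sup>+ z. ennreal (\<bar>fst z - snd z\<bar> powr p) \<partial>\<pi>) powr (1 / p)"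

definition tail_moment :: "real \<Rightarrow> real \<Rightarrow> real measure \<Rightarrow> real" where
  "tail_moment p \<epsilon> \<mu> = (LINT x:(- quantile_interval \<mu> \<epsilon>)|\<mu>. \<bar>x\<bar> powr p)"

end

theory Submission
  imports Defs
begin

text \<open>
  Tightness confines the quantiles \<open>X\<^sub>\<mu>\<^sub>n(s)\<close> to one bounded interval, which gives (i).
  An atomless \<open>\<mu>\<close> is the image of Lebesgue measure on \<open>(0,1)\<close> under its strictly increasing
  quantile function, and \<open>X\<^sub>\<mu>(z) \<in> I\<^sub>\<epsilon>[\<mu>]\<close> exactly when \<open>\<epsilon> \<le> z \<le> 1 - \<epsilon>\<close>; hence the tail
  moment is the \<open>p\<close>-th power of the \<open>L\<^sup>p\<close> norm of \<open>X\<^sub>\<mu>\<close> on \<open>(0,1) - [\<epsilon>, 1-\<epsilon>]\<close>, and (ii) is the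
  reverse Minkowski inequality. If \<open>\<W>\<^sub>p(\<mu>\<^sub>n, \<mu>) \<rightarrow> 0\<close>, nearly optimal couplings together with
  Markov's and Minkowski's inequalities give weak convergence and convergence of the \<open>p\<close>-th
  moments. Weak convergence makes \<open>X\<^sub>\<mu>\<^sub>n \<rightarrow> X\<^sub>\<mu>\<close> at every continuity point of the monotone
  \<open>X\<^sub>\<mu>\<close>, i.e. almost everywhere, and Scheffe's lemma upgrades this, with the convergence of the
  moments, to \<open>L\<^sup>1\<close> convergence of \<open>|X\<^sub>\<mu>\<^sub>n|\<^sup>p\<close>, in particular on the tail region.
\<close>

section \<open>Minkowski's inequality\<close>

lemma convex_on_nonneg_powr:
  assumes "1 \<le> p"
  shows "convex_on {0..} (\<lambda>x::real. x powr p)"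
proof -
  have scale: "(s * w) powr p \<le> s * w powr p" if "0 \<le> s" "s \<le> 1" "0 \<le> w" for s w :: real
  proof -
    have "(s * w) powr p = s powr p * w powr p" using that by (simp add: powr_mult)
    also have "\<dots> \<le> s powr 1 * w powr p"
      using that assms by (intro mult_right_mono powr_mono') auto
    finally show ?thesis using that by simp
  qed
  show ?thesis
  proof (rule convex_onI)
    fix t x y :: real assume t: "0 < t" "t < 1" and xy: "x \<in> {0..}" "y \<in> {0..}"
    consider "x = 0" | "y = 0" | "x > 0" "y > 0" using xy by fastforce
    then show "((1 - t) *\<^sub>R x + t *\<^sub>R y) powr p \<le> (1 - t) * x powr p + t * y powr p"
    proof cases
      case 1 then show ?thesis using scale[of t y] t xy by simp
    next
      case 2 then show ?thesis using scale[of "1 - t" x] t xy by simp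
    next
      case 3 then show ?thesis using convex_onD[OF powr_convex[OF assms], of t x y] t by simp
    qed
  qed simp
qed

text \<open>Convexity of \<open>x powr p\<close> at \<open>(A/(A+B)) (|u|/A) + (B/(A+B)) (|v|/B)\<close>; integrated with \<open>A\<close>, \<open>B\<close> the
  \<open>L\<^sup>p\<close> norms of the two summands, it yields Minkowski's inequality.\<close>

lemma abs_add_powr_le:
  fixes u v p :: real
  assumes "1 \<le> p" "0 < A" "0 < B"
  shows "\<bar>u + v\<bar> powr p \<le>
    (A + B) powr p * (A / (A + B) * (\<bar>u\<bar> powr p / A powr p) + B / (A + B) * (\<bar>v\<bar> powr p / B powr p))"
proof -
  define t where "t = B / (A + B)"
  have t: "0 \<le> t" "t \<le> 1" "1 - t = A / (A + B)" using assms by (auto simp: t_def field_simps)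
  have "(1 - t) * (\<bar>u\<bar> / A) + t * (\<bar>v\<bar> / B) = (\<bar>u\<bar> + \<bar>v\<bar>) / (A + B)"
    using assms by (simp only: t(3)) (simp add: t_def add_divide_distrib)
  then have "\<bar>u + v\<bar> / (A + B) \<le> (1 - t) * (\<bar>u\<bar> / A) + t * (\<bar>v\<bar> / B)"
    using assms by (simp add: divide_right_mono)
  then have "(\<bar>u + v\<bar> / (A + B)) powr p \<le> ((1 - t) * (\<bar>u\<bar> / A) + t * (\<bar>v\<bar> / B)) powr p"
    using assms by (intro powr_mono2) auto
  also have "\<dots> \<le> (1 - t) * (\<bar>u\<bar> / A) powr p + t * (\<bar>v\<bar> / B) powr p"
    using convex_onD[OF convex_on_nonneg_powr[OF assms(1)], of t "\<bar>u\<bar> / A" "\<bar>v\<bar> / B"] t assms by simp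
  finally show ?thesis
    using assms unfolding t(3) unfolding t_def by (simp add: powr_divide pos_divide_le_eq mult.commute)
qed

lemma integrable_abs_add_powr:
  fixes f g :: "'a \<Rightarrow> real"
  assumes "0 \<le> p" and [measurable]: "f \<in> borel_measurable M" "g \<in> borel_measurable M"
    and "integrable M (\<lambda>x. \<bar>f x\<bar> powr p)" "integrable M (\<lambda>x. \<bar>g x\<bar> powr p)"
  shows "integrable M (\<lambda>x. \<bar>f x + g x\<bar> powr p)"
proof (rule Bochner_Integration.integrable_bound)
  show "integrable M (\<lambda>x. 2 powr p * (\<bar>f x\<bar> powr p + \<bar>g x\<bar> powr p))"
    using assms by auto
  have "\<bar>u + v\<bar> powr p \<le> 2 powr p * (\<bar>u\<bar> powr p + \<bar>v\<bar> powr p)" for u v :: real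
  proof -
    have "\<bar>u + v\<bar> powr p \<le> (2 * max \<bar>u\<bar> \<bar>v\<bar>) powr p"
      using \<open>0 \<le> p\<close> by (intro powr_mono2) auto
    also have "\<dots> = 2 powr p * max \<bar>u\<bar> \<bar>v\<bar> powr p" by (simp add: powr_mult)
    also have "\<dots> \<le> 2 powr p * (\<bar>u\<bar> powr p + \<bar>v\<bar> powr p)"
      by (intro mult_left_mono) (auto simp: max_def)
    finally show ?thesis .
  qed
  then show "AE x in M. norm (\<bar>f x + g x\<bar> powr p) \<le> norm (2 powr p * (\<bar>f x\<bar> powr p + \<bar>g x\<bar> powr p))"
    by simp
qed measurable

theorem Minkowski_inequality:
  fixes f g :: "'a \<Rightarrow> real"
  assumes p: "1 \<le> p" and [measurable]: "f \<in> borel_measurable M" "g \<in> borel_measurable M"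
    and f: "integrable M (\<lambda>x. \<bar>f x\<bar> powr p)" and g: "integrable M (\<lambda>x. \<bar>g x\<bar> powr p)"
  shows "(\<integral>x. \<bar>f x + g x\<bar> powr p \<partial>M) powr (1/p) \<le>
    (\<integral>x. \<bar>f x\<bar> powr p \<partial>M) powr (1/p) + (\<integral>x. \<bar>g x\<bar> powr p \<partial>M) powr (1/p)"
    (is "?S powr _ \<le> ?a + ?b")
proof (rule field_le_epsilon)
  fix e :: real assume "0 < e"
  \<comment> \<open>The slack keeps \<open>A\<close> and \<open>B\<close> positive when a norm vanishes.\<close>
  define A B where "A = ?a + e/2" and "B = ?b + e/2"
  have AB: "0 < A" "0 < B" using \<open>0 < e\<close> by (auto simp: A_def B_def add_nonneg_pos)
  have "?a powr p \<le> A powr p" "?b powr p \<le> B powr p"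
    using p \<open>0 < e\<close> by (auto simp: A_def B_def intro!: powr_mono2)
  then have le1: "(\<integral>x. \<bar>f x\<bar> powr p \<partial>M) / A powr p \<le> 1" "(\<integral>x. \<bar>g x\<bar> powr p \<partial>M) / B powr p \<le> 1"
    using p AB by (simp_all add: powr_powr integral_nonneg_AE)
  have "?S \<le> (\<integral>x. (A + B) powr p * (A / (A + B) * (\<bar>f x\<bar> powr p / A powr p)
      + B / (A + B) * (\<bar>g x\<bar> powr p / B powr p)) \<partial>M)"
    using f g AB p by (intro integral_mono integrable_abs_add_powr abs_add_powr_le) auto
  also have "\<dots> = (A + B) powr p * (A / (A + B) * ((\<integral>x. \<bar>f x\<bar> powr p \<partial>M) / A powr p)
      + B / (A + B) * ((\<integral>x. \<bar>g x\<bar> powr p \<partial>M) / B powr p))"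
    using f g by simp
  also have "\<dots> \<le> (A + B) powr p * (A / (A + B) + B / (A + B))"
    using AB le1 by (intro mult_left_mono add_mono mult_left_le) auto
  also have "\<dots> = (A + B) powr p"
    using AB by (simp add: add_divide_distrib[symmetric])
  finally have "?S powr (1/p) \<le> ((A + B) powr p) powr (1/p)"
    using p by (intro powr_mono2) (auto intro: integral_nonneg_AE)
  also have "\<dots> = ?a + ?b + e"
    using AB p by (simp add: powr_powr A_def B_def)
  finally show "?S powr (1/p) \<le> ?a + ?b + e" .
qed

corollary Minkowski_reverse_triangle:
  fixes f g :: "'a \<Rightarrow> real"
  assumes p: "1 \<le> p" and [measurable]: "f \<in> borel_measurable M" "g \<in> borel_measurable M"
    and f: "integrable M (\<lambda>x. \<bar>f x\<bar> powr p)" and g: "integrable M (\<lambda>x. \<bar>g x\<bar> powr p)"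
  shows "\<bar>(\<integral>x. \<bar>f x\<bar> powr p \<partial>M) powr (1/p) - (\<integral>x. \<bar>g x\<bar> powr p \<partial>M) powr (1/p)\<bar>
    \<le> (\<integral>x. \<bar>f x - g x\<bar> powr p \<partial>M) powr (1/p)"
proof -
  have fg: "integrable M (\<lambda>x. \<bar>f x - g x\<bar> powr p)"
    using integrable_abs_add_powr[of p f M "\<lambda>x. - g x"] p f g by simp
  then have gf: "integrable M (\<lambda>x. \<bar>g x - f x\<bar> powr p)"
    by (simp add: abs_minus_commute)
  have "(\<integral>x. \<bar>f x\<bar> powr p \<partial>M) powr (1/p) \<le>
      (\<integral>x. \<bar>f x - g x\<bar> powr p \<partial>M) powr (1/p) + (\<integral>x. \<bar>g x\<bar> powr p \<partial>M) powr (1/p)"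
    using Minkowski_inequality[OF p _ _ fg g] by simp
  moreover have "(\<integral>x. \<bar>g x\<bar> powr p \<partial>M) powr (1/p) \<le>
      (\<integral>x. \<bar>f x - g x\<bar> powr p \<partial>M) powr (1/p) + (\<integral>x. \<bar>f x\<bar> powr p \<partial>M) powr (1/p)"
    using Minkowski_inequality[OF p _ _ gf f] by (simp add: abs_minus_commute)
  ultimately show ?thesis by linarith
qed

section \<open>Quantiles of a tight family\<close>

lemma quantile_between:
  assumes "real_distribution M" and a: "measure M {..a} < s" and b: "s < measure M {..<b}"
  shows "a \<le> quantile M s" "quantile M s \<le> b"
proof -
  interpret real_distribution M by fact
  let ?S = "{x. s < measure M {..<x}}"
  have low: "a < x" if "x \<in> ?S" for x
  proof (rule ccontr)
    assume "\<not> a < x"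
    then have "measure M {..<x} \<le> measure M {..a}"
      by (intro finite_measure_mono) auto
    with that a show False by simp
  qed
  then have "bdd_below ?S" by (auto intro!: bdd_belowI[of _ a] less_imp_le)
  have "b \<in> ?S" using b by simp
  then show "quantile M s \<le> b"
    unfolding quantile_def by (rule cInf_lower) fact
  show "a \<le> quantile M s"
    unfolding quantile_def using \<open>b \<in> ?S\<close> by (intro cInf_greatest) (auto intro: less_imp_le low)
qed

lemma tight_bdd_above_abs_quantile:
  assumes "tight \<mu>s" and s: "s \<in> {0<..<1}"
  shows "bdd_above (range (\<lambda>n. \<bar>quantile (\<mu>s n) s\<bar>))"
proof -
  obtain a b where ab: "\<And>n. 1 - min s (1 - s) < measure (\<mu>s n) {a<..b}"
    using \<open>tight \<mu>s\<close> s unfolding tight_def by (metis greaterThanLessThan_iff min_less_iff_conj diff_gt_0_iff_gt)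
  have "a \<le> quantile (\<mu>s n) s \<and> quantile (\<mu>s n) s \<le> b + 1" for n
  proof -
    have M: "real_distribution (\<mu>s n)" using \<open>tight \<mu>s\<close> unfolding tight_def by simp
    then interpret real_distribution "\<mu>s n" .
    have "measure (\<mu>s n) {..a} + measure (\<mu>s n) {a<..b} = measure (\<mu>s n) ({..a} \<union> {a<..b})"
      by (intro finite_measure_Union[symmetric]) auto
    also have "\<dots> \<le> 1" by simp
    finally have "measure (\<mu>s n) {..a} < s" using ab[of n] by linarith
    moreover have "measure (\<mu>s n) {a<..b} \<le> measure (\<mu>s n) {..<b + 1}"
      by (intro finite_measure_mono) auto
    then have "s < measure (\<mu>s n) {..<b + 1}" using ab[of n] by linarith
    ultimately show ?thesis using quantile_between[OF M] by blast
  qed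
  then have "\<bar>quantile (\<mu>s n) s\<bar> \<le> \<bar>a\<bar> + \<bar>b + 1\<bar>" for n
    by (smt (verit))
  then show ?thesis by (auto intro!: bdd_aboveI)
qed

lemma tight_bdd_above_diameter_quantile_interval:
  assumes "tight \<mu>s" "0 < \<epsilon>" "\<epsilon> < 1"
  shows "bdd_above (range (\<lambda>n. diameter (quantile_interval (\<mu>s n) \<epsilon>)))"
proof -
  obtain B1 B2 where B: "\<And>n. \<bar>quantile (\<mu>s n) \<epsilon>\<bar> \<le> B1" "\<And>n. \<bar>quantile (\<mu>s n) (1 - \<epsilon>)\<bar> \<le> B2"
    using tight_bdd_above_abs_quantile[OF \<open>tight \<mu>s\<close>, of \<epsilon>] tight_bdd_above_abs_quantile[OF \<open>tight \<mu>s\<close>, of "1 - \<epsilon>"]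
      assms by (auto simp: bdd_above_def)
  have "diameter (quantile_interval (\<mu>s n) \<epsilon>) \<le> B1 + B2" for n
    using B[of n] unfolding quantile_interval_def by (intro diameter_le) (auto simp: abs_le_iff)
  then show ?thesis by (auto intro!: bdd_aboveI)
qed

section \<open>The quantile representation of an atomless distribution\<close>

abbreviation lborel_01 :: "real measure" where
  "lborel_01 \<equiv> restrict_space lborel {0<..<1}"

lemma prob_space_lborel_01: "prob_space lborel_01"
  by (auto simp: emeasure_restrict_space space_restrict_space intro!: prob_spaceI)

lemma restrict_space_lborel_01:
  "S \<subseteq> {0<..<1} \<Longrightarrow> S \<in> sets borel \<Longrightarrow> restrict_space lborel_01 S = restrict_space lborel S"
  by (simp add: restrict_restrict_space Int_absorb1)

locale atomless_real_distribution = real_distribution +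
  assumes atomless: "atomless M"
begin

lemma measure_lessThan_eq_cdf: "measure M {..<a} = cdf M a"
proof -
  have "cdf M a = measure M ({..<a} \<union> {a})" unfolding cdf_def by (metis ivl_disj_un_singleton(2))
  also have "\<dots> = measure M {..<a} + measure M {a}" by (rule finite_measure_Union) auto
  finally show ?thesis using atomless unfolding atomless_def by simp
qed

lemma isCont_cdf_atomless: "isCont (cdf M) x"
  using atomless unfolding atomless_def isCont_cdf by simp

lemma quantile_less_iff:
  assumes z: "0 < z" "z < 1"
  shows "quantile M z < a \<longleftrightarrow> z < cdf M a"
proof -
  let ?S = "{x. z < cdf M x}"
  have Q: "quantile M z = Inf ?S" unfolding quantile_def measure_lessThan_eq_cdf ..
  obtain x0 where "z < cdf M x0"
    using order_tendstoD(1)[OF cdf_lim_at_top_prob z(2)]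
    by (meson eventually_happens' trivial_limit_at_top_linorder)
  then have ne: "?S \<noteq> {}" by auto
  obtain y0 where y0: "cdf M y0 < z"
    using order_tendstoD(2)[OF cdf_lim_at_bot z(1)]
    by (meson eventually_happens' trivial_limit_at_bot_linorder)
  have "y0 \<le> x" if "x \<in> ?S" for x
    using that y0 cdf_nondecreasing[of x y0] by (force intro: le_less_linear)
  then have bdd: "bdd_below ?S" by (auto intro!: bdd_belowI)
  show ?thesis
  proof
    assume "quantile M z < a"
    then obtain s where "z < cdf M s" "s < a" unfolding Q cInf_less_iff[OF ne bdd] by auto
    then show "z < cdf M a" using cdf_nondecreasing[of s a] by auto
  next
    assume "z < cdf M a"
    then have "\<forall>\<^sub>F x in at_left a. z < cdf M x"
      using isCont_cdf_atomless[of a] order_tendstoD(1)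
      by (metis continuous_at_split continuous_within)
    then obtain b where b: "b < a" "\<And>y. b < y \<Longrightarrow> y < a \<Longrightarrow> z < cdf M y"
      unfolding eventually_at_left_field by auto
    then have "quantile M z \<le> (a + b) / 2" unfolding Q by (intro cInf_lower bdd) auto
    then show "quantile M z < a" using b by auto
  qed
qed

lemma cdf_quantile:
  assumes z: "0 < z" "z < 1"
  shows "cdf M (quantile M z) = z"
proof -
  have "(cdf M \<longlongrightarrow> cdf M (quantile M z)) (at_left (quantile M z))"
    "(cdf M \<longlongrightarrow> cdf M (quantile M z)) (at_right (quantile M z))"
    using isCont_cdf_atomless[of "quantile M z"] by (simp_all add: continuous_at filterlim_at_split)
  moreover have "\<forall>\<^sub>F y in at_left (quantile M z). cdf M y \<le> z"
    unfolding eventually_at_left_field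
  proof (intro exI[of _ "quantile M z - 1"] conjI allI impI)
    fix y assume "y < quantile M z"
    then show "cdf M y \<le> z" using quantile_less_iff[OF z, of y] by linarith
  qed simp
  moreover have "\<forall>\<^sub>F y in at_right (quantile M z). z \<le> cdf M y"
    using eventually_at_right_less[of "quantile M z"]
    by eventually_elim (use quantile_less_iff[OF z] in auto)
  ultimately have "cdf M (quantile M z) \<le> z" "z \<le> cdf M (quantile M z)"
    by (auto intro: tendsto_upperbound tendsto_lowerbound)
  then show ?thesis by simp
qed

lemma strict_mono_on_quantile: "strict_mono_on {0<..<1} (quantile M)"
  using quantile_less_iff cdf_quantile by (intro strict_mono_onI) auto

lemma quantile_in_quantile_interval_iff:
  assumes "0 < z" "z < 1" "0 < \<epsilon>" "\<epsilon> < 1"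
  shows "quantile M z \<in> quantile_interval M \<epsilon> \<longleftrightarrow> \<epsilon> \<le> z \<and> z \<le> 1 - \<epsilon>"
proof -
  have "quantile M \<epsilon> \<le> quantile M z \<longleftrightarrow> \<epsilon> \<le> z" "quantile M z \<le> quantile M (1 - \<epsilon>) \<longleftrightarrow> z \<le> 1 - \<epsilon>"
    using assms by (auto simp: strict_mono_on_less_eq[OF strict_mono_on_quantile])
  then show ?thesis unfolding quantile_interval_def by simp
qed

lemma measurable_quantile [measurable]: "quantile M \<in> borel_measurable lborel_01"
proof -
  have "quantile M \<in> borel_measurable (restrict_space borel {0<..<1})"
    by (intro borel_measurable_mono_on_fnc strict_mono_on_imp_mono_on strict_mono_on_quantile)
  then show ?thesis
    by (subst measurable_cong_sets[OF sets_restrict_space_cong[OF sets_lborel] refl])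
qed

lemma distr_quantile: "distr lborel_01 borel (quantile M) = M"
proof (intro cdf_unique ext)
  interpret lborel_01: prob_space lborel_01 by (rule prob_space_lborel_01)
  show "real_distribution (distr lborel_01 borel (quantile M))" by auto
  show "real_distribution M" ..
  fix x
  have "{z \<in> space lborel_01. quantile M z \<le> x} \<in> sets lborel_01" by measurable
  then have T: "{z \<in> {0<..<1}. quantile M z \<le> x} \<in> sets borel"
    by (subst (asm) sets_restrict_space_iff) (auto simp: space_restrict_space)
  have "cdf (distr lborel_01 borel (quantile M)) x = measure lborel {z \<in> {0<..<1}. quantile M z \<le> x}"
    by (subst cdf_def)
       (auto simp: measure_distr space_restrict_space measure_restrict_space intro!: arg_cong2[where f=measure])
  \<comment> \<open>The two sets differ at most in the point \<open>cdf M x\<close>.\<close>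
  also have "\<dots> = measure lborel {0<..<cdf M x}"
    unfolding measure_def
  proof (intro arg_cong[where f=enn2real] emeasure_eq_AE)
    have "z \<in> {0<..<1} \<and> quantile M z \<le> x \<longleftrightarrow> z \<in> {0<..<cdf M x}" if "z \<noteq> cdf M x" for z
      using that quantile_less_iff[of z x] cdf_quantile[of z] cdf_nondecreasing[of "quantile M z" x]
        cdf_bounded_prob[of x] by force
    then show "AE z in lborel. z \<in> {z \<in> {0<..<1}. quantile M z \<le> x} \<longleftrightarrow> z \<in> {0<..<cdf M x}"
      using AE_lborel_singleton[of "cdf M x"] by (auto elim!: AE_mp)
  qed (use T in auto)
  also have "\<dots> = cdf M x" by (simp add: cdf_nonneg)
  finally show "cdf (distr lborel_01 borel (quantile M)) x = cdf M x" .
qed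

lemma integral_quantile:
  fixes g :: "real \<Rightarrow> real"
  assumes [measurable]: "g \<in> borel_measurable borel"
  shows "integral\<^sup>L M g = (\<integral>z. g (quantile M z) \<partial>lborel_01)"
  by (subst distr_quantile[symmetric]) (rule integral_distr; simp)

lemma integrable_quantile_iff:
  fixes g :: "real \<Rightarrow> real"
  assumes [measurable]: "g \<in> borel_measurable borel"
  shows "integrable M g \<longleftrightarrow> integrable lborel_01 (\<lambda>z. g (quantile M z))"
  by (subst distr_quantile[symmetric]) (rule integrable_distr_eq; simp)

lemma tail_moment_eq_quantile:
  assumes "0 < \<epsilon>" "\<epsilon> < 1"
  shows "tail_moment p \<epsilon> M = (\<integral>z. \<bar>quantile M z\<bar> powr p \<partial>restrict_space lborel ({0<..<\<epsilon>} \<union> {1-\<epsilon><..<1}))"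
proof -
  let ?A = "{0<..<\<epsilon>} \<union> {1-\<epsilon><..<1}"
  have "tail_moment p \<epsilon> M = (\<integral>x. indicator (- quantile_interval M \<epsilon>) x * \<bar>x\<bar> powr p \<partial>M)"
    unfolding tail_moment_def set_lebesgue_integral_def by simp
  also have "\<dots> = (\<integral>z. indicator (- quantile_interval M \<epsilon>) (quantile M z) * \<bar>quantile M z\<bar> powr p \<partial>lborel_01)"
    unfolding quantile_interval_def by (rule integral_quantile) measurable
  also have "\<dots> = (\<integral>z. indicator ?A z *\<^sub>R \<bar>quantile M z\<bar> powr p \<partial>lborel_01)"
    using assms by (intro Bochner_Integration.integral_cong)
      (auto simp: indicator_def quantile_in_quantile_interval_iff space_restrict_space)
  also have "\<dots> = (\<integral>z. \<bar>quantile M z\<bar> powr p \<partial>restrict_space lborel_01 ?A)"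
    by (rule integral_restrict_space[symmetric]) (auto simp: sets_restrict_space_iff)
  also have "restrict_space lborel_01 ?A = restrict_space lborel ?A"
    using assms by (intro restrict_space_lborel_01) auto
  finally show ?thesis .
qed

lemma measurable_quantile_restrict_space:
  assumes "S \<subseteq> {0<..<1}" "S \<in> sets borel"
  shows "quantile M \<in> borel_measurable (restrict_space lborel S)"
  using measurable_restrict_space1[OF measurable_quantile, of S] restrict_space_lborel_01[OF assms] by simp

lemma integrable_abs_quantile_powr:
  assumes "Pp p M"
  shows "integrable lborel_01 (\<lambda>z. \<bar>quantile M z\<bar> powr p)"
  using assms unfolding Pp_def by (subst integrable_quantile_iff[symmetric]) auto

lemma integrable_restrict_space_abs_quantile_powr:
  assumes "Pp p M" "S \<subseteq> {0<..<1}" "S \<in> sets borel"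
  shows "integrable (restrict_space lborel S) (\<lambda>z. \<bar>quantile M z\<bar> powr p)"
proof -
  have "integrable lborel_01 (\<lambda>z. indicator S z *\<^sub>R \<bar>quantile M z\<bar> powr p)"
    using assms by (intro integrable_mult_indicator integrable_abs_quantile_powr) (auto simp: sets_restrict_space_iff)
  then have "integrable (restrict_space lborel_01 S) (\<lambda>z. \<bar>quantile M z\<bar> powr p)"
    using assms by (subst integrable_restrict_space) (auto simp: sets_restrict_space_iff)
  then show ?thesis using restrict_space_lborel_01[OF assms(2,3)] by simp
qed

end

lemma atomless_real_distributionI:
  "Pp p \<mu> \<Longrightarrow> atomless \<mu> \<Longrightarrow> atomless_real_distribution \<mu>"
  unfolding atomless_real_distribution_def atomless_real_distribution_axioms_def Pp_def by simp

lemma tail_moment_root_diff_le: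
  assumes p: "1 \<le> p" and \<epsilon>: "0 < \<epsilon>" "\<epsilon> < 1"
    and \<mu>: "Pp p \<mu>" "atomless \<mu>" and \<nu>: "Pp p \<nu>" "atomless \<nu>"
  shows "\<bar>tail_moment p \<epsilon> \<mu> powr (1/p) - tail_moment p \<epsilon> \<nu> powr (1/p)\<bar>
    \<le> (LINT z:({0<..<\<epsilon>} \<union> {1-\<epsilon><..<1})|lborel. \<bar>quantile \<mu> z - quantile \<nu> z\<bar> powr p) powr (1/p)"
proof -
  interpret \<mu>: atomless_real_distribution \<mu> by (rule atomless_real_distributionI[OF \<mu>])
  interpret \<nu>: atomless_real_distribution \<nu> by (rule atomless_real_distributionI[OF \<nu>])
  let ?A = "{0<..<\<epsilon>} \<union> {1-\<epsilon><..<1}"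
  have A: "?A \<subseteq> {0<..<1}" "?A \<in> sets borel" using \<epsilon> by auto
  have "(LINT z:?A|lborel. \<bar>quantile \<mu> z - quantile \<nu> z\<bar> powr p) =
      (\<integral>z. \<bar>quantile \<mu> z - quantile \<nu> z\<bar> powr p \<partial>restrict_space lborel ?A)"
    by (simp add: set_lebesgue_integral_def integral_restrict_space)
  then show ?thesis
    unfolding \<mu>.tail_moment_eq_quantile[OF \<epsilon>] \<nu>.tail_moment_eq_quantile[OF \<epsilon>]
    using A \<mu> \<nu> by (auto intro!: Minkowski_reverse_triangle[OF p] \<mu>.measurable_quantile_restrict_space
        \<nu>.measurable_quantile_restrict_space \<mu>.integrable_restrict_space_abs_quantile_powr
        \<nu>.integrable_restrict_space_abs_quantile_powr)
qed

section \<open>Couplings\<close>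

lemma couplingsD:
  assumes "\<pi> \<in> couplings \<mu> \<nu>"
  shows "prob_space \<pi>" "sets \<pi> = sets borel" "distr \<pi> borel fst = \<mu>" "distr \<pi> borel snd = \<nu>"
  using assms unfolding couplings_def by auto

lemma measurable_coupling:
  assumes "\<pi> \<in> couplings \<mu> \<nu>" "f \<in> borel_measurable (borel :: (real \<times> real) measure)"
  shows "f \<in> borel_measurable \<pi>"
  using assms(2) measurable_cong_sets[of \<pi> borel borel borel] couplingsD(2)[OF assms(1)] by simp

lemma measurable_coupling_fst_snd:
  assumes "\<pi> \<in> couplings \<mu> \<nu>"
  shows "fst \<in> borel_measurable \<pi>" "snd \<in> borel_measurable \<pi>"
  by (intro measurable_coupling[OF assms] borel_measurable_continuous_onI continuous_intros)+

lemma
  fixes g :: "real \<Rightarrow> real"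
  assumes \<pi>: "\<pi> \<in> couplings \<mu> \<nu>" and [measurable]: "g \<in> borel_measurable borel"
  shows integral_coupling_fst: "(\<integral>z. g (fst z) \<partial>\<pi>) = integral\<^sup>L \<mu> g"
    and integrable_coupling_fst: "integrable \<pi> (\<lambda>z. g (fst z)) \<longleftrightarrow> integrable \<mu> g"
    and integral_coupling_snd: "(\<integral>z. g (snd z) \<partial>\<pi>) = integral\<^sup>L \<nu> g"
    and integrable_coupling_snd: "integrable \<pi> (\<lambda>z. g (snd z)) \<longleftrightarrow> integrable \<nu> g"
proof -
  note measurable_coupling_fst_snd[OF \<pi>, measurable]
  show "(\<integral>z. g (fst z) \<partial>\<pi>) = integral\<^sup>L \<mu> g" "integrable \<pi> (\<lambda>z. g (fst z)) \<longleftrightarrow> integrable \<mu> g"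
    using integral_distr[of fst \<pi> borel g] integrable_distr_eq[of fst \<pi> borel g] couplingsD(3)[OF \<pi>] by simp_all
  show "(\<integral>z. g (snd z) \<partial>\<pi>) = integral\<^sup>L \<nu> g" "integrable \<pi> (\<lambda>z. g (snd z)) \<longleftrightarrow> integrable \<nu> g"
    using integral_distr[of snd \<pi> borel g] integrable_distr_eq[of snd \<pi> borel g] couplingsD(4)[OF \<pi>] by simp_all
qed

lemma
  assumes \<pi>: "\<pi> \<in> couplings \<mu> \<nu>"
  shows measure_coupling_fst_le: "measure \<pi> {z \<in> space \<pi>. fst z \<le> x} = cdf \<mu> x"
    and measure_coupling_snd_le: "measure \<pi> {z \<in> space \<pi>. snd z \<le> x} = cdf \<nu> x"
proof -
  note measurable_coupling_fst_snd[OF \<pi>, measurable]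
  show "measure \<pi> {z \<in> space \<pi>. fst z \<le> x} = cdf \<mu> x"
    unfolding cdf_def couplingsD(3)[OF \<pi>, symmetric]
    by (subst measure_distr) (auto intro!: arg_cong2[where f=measure])
  show "measure \<pi> {z \<in> space \<pi>. snd z \<le> x} = cdf \<nu> x"
    unfolding cdf_def couplingsD(4)[OF \<pi>, symmetric]
    by (subst measure_distr) (auto intro!: arg_cong2[where f=measure])
qed

lemma pair_measure_in_couplings:
  assumes "real_distribution \<mu>" "real_distribution \<nu>"
  shows "\<mu> \<Otimes>\<^sub>M \<nu> \<in> couplings \<mu> \<nu>"
proof -
  interpret \<mu>: real_distribution \<mu> by fact
  interpret \<nu>: real_distribution \<nu> by fact
  interpret pair_prob_space \<mu> \<nu> ..
  have "sets (\<mu> \<Otimes>\<^sub>M \<nu>) = sets (borel :: (real \<times> real) measure)"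
    by (subst borel_prod[symmetric]) (intro sets_pair_measure_cong; simp)
  moreover have "distr (\<mu> \<Otimes>\<^sub>M \<nu>) borel fst = \<mu>"
    using \<nu>.distr_pair_fst[of \<mu>] by (subst distr_cong[of _ _ _ \<mu> fst fst]) auto
  moreover have "distr (\<mu> \<Otimes>\<^sub>M \<nu>) borel snd = \<nu>"
  proof (rule measure_eqI)
    fix A assume "A \<in> sets (distr (\<mu> \<Otimes>\<^sub>M \<nu>) borel snd)"
    then have A: "A \<in> sets \<nu>" by simp
    have "snd -` A \<inter> space (\<mu> \<Otimes>\<^sub>M \<nu>) = space \<mu> \<times> A"
      using sets.sets_into_space[OF A] by (auto simp: space_pair_measure)
    then show "emeasure (distr (\<mu> \<Otimes>\<^sub>M \<nu>) borel snd) A = emeasure \<nu> A"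
      using A \<mu>.emeasure_space_1 by (simp add: emeasure_distr \<nu>.emeasure_pair_measure_Times \<mu>.space_eq_univ)
  qed simp
  ultimately show ?thesis
    unfolding couplings_def using prob_space_pair[OF \<mu>.prob_space_axioms \<nu>.prob_space_axioms] by auto
qed

lemma integrable_coupling_cost:
  assumes \<pi>: "\<pi> \<in> couplings \<mu> \<nu>" and "Pp p \<mu>" "Pp p \<nu>" "0 \<le> p"
  shows "integrable \<pi> (\<lambda>z. \<bar>fst z - snd z\<bar> powr p)"
proof -
  note measurable_coupling_fst_snd[OF \<pi>, measurable]
  have g: "(\<lambda>x::real. \<bar>x\<bar> powr p) \<in> borel_measurable borel" by measurable
  have "integrable \<pi> (\<lambda>z. \<bar>fst z\<bar> powr p)" "integrable \<pi> (\<lambda>z. \<bar>- snd z\<bar> powr p)"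
    using assms unfolding Pp_def by (simp_all add: integrable_coupling_fst[OF \<pi> g] integrable_coupling_snd[OF \<pi> g])
  then show ?thesis using integrable_abs_add_powr[of p fst \<pi> "\<lambda>z. - snd z"] assms by simp
qed

lemma coupling_cost_less_wasserstein:
  assumes p: "0 < p" and \<mu>: "Pp p \<mu>" and \<nu>: "Pp p \<nu>" and r: "wasserstein p \<mu> \<nu> powr p < r"
  obtains \<pi> where "\<pi> \<in> couplings \<mu> \<nu>" "(\<integral>z. \<bar>fst z - snd z\<bar> powr p \<partial>\<pi>) < r"
proof -
  define K where "K = (INF \<pi>\<in>couplings \<mu> \<nu>. \<integral>\<^sup>+ z. ennreal (\<bar>fst z - snd z\<bar> powr p) \<partial>\<pi>)"
  have cost_eq: "(\<integral>\<^sup>+ z. ennreal (\<bar>fst z - snd z\<bar> powr p) \<partial>\<pi>) = ennreal (\<integral>z. \<bar>fst z - snd z\<bar> powr p \<partial>\<pi>)"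
    if "\<pi> \<in> couplings \<mu> \<nu>" for \<pi>
    using \<mu> \<nu> p by (intro nn_integral_eq_integral integrable_coupling_cost[OF that]) auto
  \<comment> \<open>The product coupling makes the infimum finite, so \<open>enn2real\<close> in \<open>wasserstein\<close> loses nothing.\<close>
  have "\<mu> \<Otimes>\<^sub>M \<nu> \<in> couplings \<mu> \<nu>"
    using \<mu> \<nu> unfolding Pp_def by (intro pair_measure_in_couplings) auto
  then have "K \<le> ennreal (\<integral>z. \<bar>fst z - snd z\<bar> powr p \<partial>(\<mu> \<Otimes>\<^sub>M \<nu>))"
    unfolding K_def cost_eq[OF \<open>\<mu> \<Otimes>\<^sub>M \<nu> \<in> couplings \<mu> \<nu>\<close>, symmetric] by (rule INF_lower)
  then have "K < \<infinity>" by (rule le_less_trans) simp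
  moreover have "wasserstein p \<mu> \<nu> powr p = enn2real K"
    using p by (simp add: wasserstein_def K_def powr_powr)
  ultimately have "K = ennreal (wasserstein p \<mu> \<nu> powr p)"
    by (simp add: ennreal_enn2real)
  moreover have "0 < r" using r powr_ge_zero[of "wasserstein p \<mu> \<nu>" p] by linarith
  ultimately have "K < ennreal r"
    using r by (simp add: ennreal_lessI)
  then obtain \<pi> where \<pi>: "\<pi> \<in> couplings \<mu> \<nu>" and "ennreal (\<integral>z. \<bar>fst z - snd z\<bar> powr p \<partial>\<pi>) < ennreal r"
    unfolding K_def INF_less_iff by (auto simp: cost_eq)
  then have "(\<integral>z. \<bar>fst z - snd z\<bar> powr p \<partial>\<pi>) < r"
    by (simp add: ennreal_less_iff integral_nonneg_AE)
  with \<pi> show ?thesis by (rule that)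
qed

lemma wasserstein_tendsto_zero_imp_couplings:
  assumes p: "0 < p" and \<mu>: "Pp p \<mu>" and \<mu>s: "\<And>n. Pp p (\<mu>s n)"
    and W: "(\<lambda>n. wasserstein p (\<mu>s n) \<mu>) \<longlonglongrightarrow> 0"
  obtains \<pi> where "\<And>n. \<pi> n \<in> couplings (\<mu>s n) \<mu>"
    and "(\<lambda>n. \<integral>z. \<bar>fst z - snd z\<bar> powr p \<partial>\<pi> n) \<longlonglongrightarrow> 0"
proof -
  define r where "r n = wasserstein p (\<mu>s n) \<mu> powr p + 1 / Suc n" for n
  have "\<exists>\<pi>. \<pi> \<in> couplings (\<mu>s n) \<mu> \<and> (\<integral>z. \<bar>fst z - snd z\<bar> powr p \<partial>\<pi>) < r n" for n
    using coupling_cost_less_wasserstein[OF p \<mu>s \<mu>, of n "r n"] by (auto simp: r_def)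
  then obtain \<pi> where "\<forall>n. \<pi> n \<in> couplings (\<mu>s n) \<mu> \<and> (\<integral>z. \<bar>fst z - snd z\<bar> powr p \<partial>\<pi> n) < r n"
    by (rule choice[THEN exE, OF allI])
  then have \<pi>: "\<And>n. \<pi> n \<in> couplings (\<mu>s n) \<mu>" and less: "\<And>n. (\<integral>z. \<bar>fst z - snd z\<bar> powr p \<partial>\<pi> n) < r n"
    by simp_all
  have "(\<lambda>n. wasserstein p (\<mu>s n) \<mu> powr p) \<longlonglongrightarrow> 0"
    by (rule tendsto_zero_powrI[OF W tendsto_const]) (use p in \<open>auto simp: wasserstein_def\<close>)
  then have r: "r \<longlonglongrightarrow> 0"
    unfolding r_def using tendsto_add[OF _ LIMSEQ_inverse_real_of_nat] by (simp add: inverse_eq_divide)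
  have nonneg: "0 \<le> (\<integral>z. \<bar>fst z - snd z\<bar> powr p \<partial>\<pi> n)" for n
    by (rule integral_nonneg_AE) simp
  have "(\<lambda>n. \<integral>z. \<bar>fst z - snd z\<bar> powr p \<partial>\<pi> n) \<longlonglongrightarrow> 0"
    by (rule tendsto_sandwich[OF always_eventually always_eventually tendsto_const r])
      (intro allI nonneg less_imp_le less)+
  with \<pi> show ?thesis by (rule that)
qed

section \<open>Convergence in the Wasserstein distance\<close>

lemma measure_le_Markov_shift:
  fixes u v :: "'a \<Rightarrow> real"
  assumes "prob_space M" and [measurable]: "u \<in> borel_measurable M" "v \<in> borel_measurable M"
    and I: "integrable M (\<lambda>z. \<bar>u z - v z\<bar> powr p)" and "0 < \<delta>" "0 < p"
  shows "measure M {z \<in> space M. u z \<le> x} \<le>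
    measure M {z \<in> space M. v z \<le> x + \<delta>} + (\<integral>z. \<bar>u z - v z\<bar> powr p \<partial>M) / \<delta> powr p"
proof -
  interpret prob_space M by fact
  have "\<delta> powr p \<le> \<bar>u z - v z\<bar> powr p" if "u z \<le> x" "\<not> v z \<le> x + \<delta>" for z
    using that \<open>0 < \<delta>\<close> \<open>0 < p\<close> by (intro powr_mono2) auto
  then have "measure M {z \<in> space M. u z \<le> x} \<le>
      measure M ({z \<in> space M. v z \<le> x + \<delta>} \<union> {z \<in> space M. \<delta> powr p \<le> \<bar>u z - v z\<bar> powr p})"
    by (intro finite_measure_mono) auto
  also have "\<dots> \<le> measure M {z \<in> space M. v z \<le> x + \<delta>} + measure M {z \<in> space M. \<delta> powr p \<le> \<bar>u z - v z\<bar> powr p}"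
    by (intro measure_Un_le) measurable
  also have "measure M {z \<in> space M. \<delta> powr p \<le> \<bar>u z - v z\<bar> powr p} \<le> (\<integral>z. \<bar>u z - v z\<bar> powr p \<partial>M) / \<delta> powr p"
    using integral_Markov_inequality_measure[OF I, of "space M" "\<delta> powr p"] \<open>0 < \<delta>\<close> by auto
  finally show ?thesis by simp
qed

lemma weak_conv_m_of_couplings:
  assumes \<pi>: "\<And>n. \<pi> n \<in> couplings (\<mu>s n) \<mu>" and p: "0 < p"
    and I: "\<And>n. integrable (\<pi> n) (\<lambda>z. \<bar>fst z - snd z\<bar> powr p)"
    and cost: "(\<lambda>n. \<integral>z. \<bar>fst z - snd z\<bar> powr p \<partial>\<pi> n) \<longlonglongrightarrow> 0"
  shows "weak_conv_m \<mu>s \<mu>"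
  unfolding weak_conv_m_def weak_conv_def
proof (intro allI impI tendstoI)
  fix x e :: real assume "isCont (cdf \<mu>) x" "0 < e"
  then obtain d where "0 < d" and d: "\<And>y. dist y x < d \<Longrightarrow> dist (cdf \<mu> y) (cdf \<mu> x) < e/2"
    unfolding continuous_at_eps_delta by (meson half_gt_zero)
  define \<delta> where "\<delta> = d / 2"
  have "0 < \<delta>" using \<open>0 < d\<close> by (simp add: \<delta>_def)
  have "dist (cdf \<mu> (x + \<delta>)) (cdf \<mu> x) < e/2" "dist (cdf \<mu> (x - \<delta>)) (cdf \<mu> x) < e/2"
    using \<open>0 < d\<close> by (intro d; simp add: \<delta>_def dist_real_def)+
  then have \<delta>: "cdf \<mu> (x + \<delta>) < cdf \<mu> x + e/2" "cdf \<mu> x - e/2 < cdf \<mu> (x - \<delta>)"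
    unfolding dist_real_def abs_less_iff by linarith+
  have "\<forall>\<^sub>F n in sequentially. (\<integral>z. \<bar>fst z - snd z\<bar> powr p \<partial>\<pi> n) < e/2 * \<delta> powr p"
    using \<open>0 < e\<close> \<open>0 < \<delta>\<close> by (intro order_tendstoD(2)[OF cost]) simp
  then show "\<forall>\<^sub>F n in sequentially. dist (cdf (\<mu>s n) x) (cdf \<mu> x) < e"
  proof eventually_elim
    case (elim n)
    have \<pi>n: "\<pi> n \<in> couplings (\<mu>s n) \<mu>" by (rule \<pi>)
    note fst_snd = measurable_coupling_fst_snd[OF \<pi>n]
    have err: "(\<integral>z. \<bar>fst z - snd z\<bar> powr p \<partial>\<pi> n) / \<delta> powr p < e/2"
      using elim \<open>0 < \<delta>\<close> by (simp add: divide_less_eq)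
    have "cdf (\<mu>s n) x \<le> cdf \<mu> (x + \<delta>) + (\<integral>z. \<bar>fst z - snd z\<bar> powr p \<partial>\<pi> n) / \<delta> powr p"
      using measure_le_Markov_shift[OF couplingsD(1)[OF \<pi>n] fst_snd I \<open>0 < \<delta>\<close> p, of x]
      by (simp add: measure_coupling_fst_le[OF \<pi>n] measure_coupling_snd_le[OF \<pi>n])
    moreover have "integrable (\<pi> n) (\<lambda>z. \<bar>snd z - fst z\<bar> powr p)"
      using I[of n] by (simp add: abs_minus_commute)
    then have "cdf \<mu> (x - \<delta>) \<le> cdf (\<mu>s n) x + (\<integral>z. \<bar>fst z - snd z\<bar> powr p \<partial>\<pi> n) / \<delta> powr p"
      using measure_le_Markov_shift[OF couplingsD(1)[OF \<pi>n] fst_snd(2,1) _ \<open>0 < \<delta>\<close> p, of "x - \<delta>"]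
      by (simp add: measure_coupling_fst_le[OF \<pi>n] measure_coupling_snd_le[OF \<pi>n] abs_minus_commute)
    ultimately show ?case using \<delta> err unfolding dist_real_def abs_less_iff by linarith
  qed
qed

lemma moment_tendsto_of_couplings:
  assumes p: "1 \<le> p" and \<pi>: "\<And>n. \<pi> n \<in> couplings (\<mu>s n) \<mu>"
    and \<mu>s: "\<And>n. Pp p (\<mu>s n)" and \<mu>: "Pp p \<mu>"
    and cost: "(\<lambda>n. \<integral>z. \<bar>fst z - snd z\<bar> powr p \<partial>\<pi> n) \<longlonglongrightarrow> 0"
  shows "(\<lambda>n. \<integral>x. \<bar>x\<bar> powr p \<partial>\<mu>s n) \<longlonglongrightarrow> (\<integral>x. \<bar>x\<bar> powr p \<partial>\<mu>)"
proof -
  have dist: "\<bar>(\<integral>x. \<bar>x\<bar> powr p \<partial>\<mu>s n) powr (1/p) - (\<integral>x. \<bar>x\<bar> powr p \<partial>\<mu>) powr (1/p)\<bar>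
      \<le> (\<integral>z. \<bar>fst z - snd z\<bar> powr p \<partial>\<pi> n) powr (1/p)" for n
  proof -
    note measurable_coupling_fst_snd[OF \<pi>, measurable]
    have g: "(\<lambda>x::real. \<bar>x\<bar> powr p) \<in> borel_measurable borel" by measurable
    show ?thesis
      using Minkowski_reverse_triangle[OF p, of fst "\<pi> n" snd] \<mu>s[of n] \<mu> unfolding Pp_def
      by (simp add: integral_coupling_fst[OF \<pi> g] integral_coupling_snd[OF \<pi> g]
          integrable_coupling_fst[OF \<pi> g] integrable_coupling_snd[OF \<pi> g])
  qed
  have "(\<lambda>n. (\<integral>z. \<bar>fst z - snd z\<bar> powr p \<partial>\<pi> n) powr (1/p)) \<longlonglongrightarrow> 0"
    using p by (intro tendsto_zero_powrI[OF cost tendsto_const]) (auto intro: integral_nonneg_AE)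
  then have "(\<lambda>n. (\<integral>x. \<bar>x\<bar> powr p \<partial>\<mu>s n) powr (1/p) - (\<integral>x. \<bar>x\<bar> powr p \<partial>\<mu>) powr (1/p)) \<longlonglongrightarrow> 0"
    by (rule Lim_null_comparison[OF always_eventually, rotated]) (simp add: dist)
  then have "(\<lambda>n. (\<integral>x. \<bar>x\<bar> powr p \<partial>\<mu>s n) powr (1/p)) \<longlonglongrightarrow> (\<integral>x. \<bar>x\<bar> powr p \<partial>\<mu>) powr (1/p)"
    by (simp add: LIM_zero_iff)
  then have "(\<lambda>n. ((\<integral>x. \<bar>x\<bar> powr p \<partial>\<mu>s n) powr (1/p)) powr p) \<longlonglongrightarrow> ((\<integral>x. \<bar>x\<bar> powr p \<partial>\<mu>) powr (1/p)) powr p"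
    by (rule tendsto_powr2[OF _ tendsto_const]) (use p in auto)
  moreover have "0 \<le> (\<integral>x. \<bar>x\<bar> powr p \<partial>\<mu>s n)" "0 \<le> (\<integral>x. \<bar>x\<bar> powr p \<partial>\<mu>)" for n
    by (rule integral_nonneg_AE, simp)+
  ultimately show ?thesis
    using p by (simp add: powr_powr)
qed

context atomless_real_distribution begin

lemma quantile_tendsto:
  assumes \<mu>s: "\<And>n. atomless_real_distribution (\<mu>s n)" and "weak_conv_m \<mu>s M"
    and z: "0 < z" "z < 1" and cont: "isCont (quantile M) z"
  shows "(\<lambda>n. quantile (\<mu>s n) z) \<longlonglongrightarrow> quantile M z"
proof -
  have cdf: "(\<lambda>n. cdf (\<mu>s n) x) \<longlonglongrightarrow> cdf M x" for x
    using \<open>weak_conv_m \<mu>s M\<close> isCont_cdf_atomless unfolding weak_conv_m_def weak_conv_def by blast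
  have lim: "(quantile M \<longlongrightarrow> quantile M z) (at_right z)" "(quantile M \<longlongrightarrow> quantile M z) (at_left z)"
    using cont by (simp_all add: continuous_at filterlim_at_split)
  show ?thesis
  proof (rule order_tendstoI)
    fix a assume "quantile M z < a"
    then have "\<forall>\<^sub>F w in at_right z. quantile M w < a"
      using order_tendstoD(2)[OF lim(1)] by blast
    moreover have "\<forall>\<^sub>F w in at_right z. z < w \<and> w < 1"
      using z unfolding eventually_at_right_field by (intro exI[of _ 1]) auto
    ultimately obtain w where w: "quantile M w < a" "z < w" "w < 1"
      using eventually_happens'[OF trivial_limit_at_right_real] eventually_conj by blast
    then have "z < cdf M a" using quantile_less_iff[of w a] z by auto
    then show "\<forall>\<^sub>F n in sequentially. quantile (\<mu>s n) z < a"
      using order_tendstoD(1)[OF cdf] atomless_real_distribution.quantile_less_iff[OF \<mu>s z] by auto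
  next
    fix a assume "a < quantile M z"
    then have "\<forall>\<^sub>F w in at_left z. a < quantile M w"
      using order_tendstoD(1)[OF lim(2)] by blast
    moreover have "\<forall>\<^sub>F w in at_left z. 0 < w \<and> w < z"
      using z unfolding eventually_at_left_field by (intro exI[of _ 0]) auto
    ultimately obtain w where w: "a < quantile M w" "0 < w" "w < z"
      using eventually_happens'[OF trivial_limit_at_left_real] eventually_conj by blast
    define b where "b = (a + quantile M w) / 2"
    have b: "a < b" "b < quantile M w" using w by (auto simp: b_def)
    then have "cdf M b < z" using quantile_less_iff[of w b] w z by auto
    then have "\<forall>\<^sub>F n in sequentially. cdf (\<mu>s n) b < z"
      by (rule order_tendstoD(2)[OF cdf])
    then show "\<forall>\<^sub>F n in sequentially. a < quantile (\<mu>s n) z"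
    proof eventually_elim
      case (elim n)
      then show ?case using atomless_real_distribution.quantile_less_iff[OF \<mu>s z, of n b] b(1) by auto
    qed
  qed
qed

lemma AE_quantile_tendsto:
  assumes "\<And>n. atomless_real_distribution (\<mu>s n)" "weak_conv_m \<mu>s M"
  shows "AE z in lborel_01. (\<lambda>n. quantile (\<mu>s n) z) \<longlonglongrightarrow> quantile M z"
proof (rule AE_I')
  let ?D = "{z \<in> {0<..<1}. \<not> isCont (quantile M) z}"
  have "countable ?D"
    by (intro mono_on_ctble_discont_open strict_mono_on_imp_mono_on strict_mono_on_quantile) auto
  then show "?D \<in> null_sets lborel_01"
    by (subst null_sets_restrict_space) (auto intro: countable_imp_null_set_lborel)
  show "{z \<in> space lborel_01. \<not> (\<lambda>n. quantile (\<mu>s n) z) \<longlonglongrightarrow> quantile M z} \<subseteq> ?D"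
    using quantile_tendsto[OF assms] by (auto simp: space_restrict_space)
qed

end

lemma integral_restrict_space_tendsto_Scheffe:
  fixes F :: "nat \<Rightarrow> 'a \<Rightarrow> real"
  assumes F: "\<And>n. integrable M (F n)" and f: "integrable M f"
    and lim: "AE x in M. (\<lambda>n. F n x) \<longlonglongrightarrow> f x" and nonneg: "\<And>n x. x \<in> space M \<Longrightarrow> 0 \<le> F n x"
    and int: "(\<lambda>n. \<integral>x. F n x \<partial>M) \<longlonglongrightarrow> (\<integral>x. f x \<partial>M)" and S: "S \<in> sets M"
  shows "(\<lambda>n. integral\<^sup>L (restrict_space M S) (F n)) \<longlonglongrightarrow> integral\<^sup>L (restrict_space M S) f"
proof -
  have "AE x in M. 0 \<le> f x"
    using lim AE_space by eventually_elim (auto intro: LIMSEQ_le_const nonneg)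
  then have "(\<integral>\<^sup>+x. norm (f x) \<partial>M) = ennreal (\<integral>x. f x \<partial>M)"
    using f by (subst nn_integral_eq_integral[symmetric]) (auto intro!: nn_integral_cong_AE)
  moreover have "(\<integral>\<^sup>+x. norm (F n x) \<partial>M) = ennreal (\<integral>x. F n x \<partial>M)" for n
    using F nonneg by (subst nn_integral_eq_integral[symmetric]) (auto intro!: nn_integral_cong)
  ultimately have "limsup (\<lambda>n. \<integral>\<^sup>+x. norm (F n x) \<partial>M) \<le> (\<integral>\<^sup>+x. norm (f x) \<partial>M)"
    using lim_imp_Limsup[OF trivial_limit_sequentially tendsto_ennrealI[OF int]] by simp
  then have L1: "(\<lambda>n. \<integral>\<^sup>+x. norm (F n x - f x) \<partial>M) \<longlonglongrightarrow> 0"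
    by (rule Scheffe_lemma1[OF F f lim])
  show ?thesis
  proof (rule tendsto_L1_int)
    have S': "S \<inter> space M \<in> sets M" using S by simp
    show "integrable (restrict_space M S) (F n)" for n
      unfolding integrable_restrict_space[OF S'] by (rule integrable_mult_indicator[OF S F])
    show "integrable (restrict_space M S) f"
      unfolding integrable_restrict_space[OF S'] by (rule integrable_mult_indicator[OF S f])
    have "(\<integral>\<^sup>+x. norm (F n x - f x) \<partial>restrict_space M S) \<le> (\<integral>\<^sup>+x. norm (F n x - f x) \<partial>M)" for n
      unfolding nn_integral_restrict_space[OF S'] by (intro nn_integral_mono) (simp add: indicator_def)
    then show "(\<lambda>n. \<integral>\<^sup>+x. norm (F n x - f x) \<partial>restrict_space M S) \<longlonglongrightarrow> 0"
      by (intro tendsto_sandwich[OF _ _ tendsto_const L1]) auto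
  qed
qed

lemma tail_moment_tendsto_of_wasserstein:
  assumes p: "1 \<le> p" and \<epsilon>: "0 < \<epsilon>" "\<epsilon> < 1"
    and \<mu>s: "\<And>n. Pp p (\<mu>s n)" "\<And>n. atomless (\<mu>s n)" and \<mu>: "Pp p \<mu>" "atomless \<mu>"
    and W: "(\<lambda>n. wasserstein p (\<mu>s n) \<mu>) \<longlonglongrightarrow> 0"
  shows "(\<lambda>n. tail_moment p \<epsilon> (\<mu>s n)) \<longlonglongrightarrow> tail_moment p \<epsilon> \<mu>"
proof -
  interpret \<mu>: atomless_real_distribution \<mu> by (rule atomless_real_distributionI[OF \<mu>])
  have \<mu>s': "atomless_real_distribution (\<mu>s n)" for n
    by (rule atomless_real_distributionI[OF \<mu>s(1,2)])
  obtain \<pi> where \<pi>: "\<And>n. \<pi> n \<in> couplings (\<mu>s n) \<mu>"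
    and cost: "(\<lambda>n. \<integral>z. \<bar>fst z - snd z\<bar> powr p \<partial>\<pi> n) \<longlonglongrightarrow> 0"
    using wasserstein_tendsto_zero_imp_couplings[OF _ \<mu>(1) \<mu>s(1) W] p by auto
  have "integrable (\<pi> n) (\<lambda>z. \<bar>fst z - snd z\<bar> powr p)" for n
    using p by (intro integrable_coupling_cost[OF \<pi> \<mu>s(1) \<mu>(1)]) simp
  then have "weak_conv_m \<mu>s \<mu>"
    using p by (intro weak_conv_m_of_couplings[OF \<pi> _ _ cost]) auto
  then have "AE z in lborel_01. (\<lambda>n. quantile (\<mu>s n) z) \<longlonglongrightarrow> quantile \<mu> z"
    by (rule \<mu>.AE_quantile_tendsto[OF \<mu>s'])
  then have lim: "AE z in lborel_01. (\<lambda>n. \<bar>quantile (\<mu>s n) z\<bar> powr p) \<longlonglongrightarrow> \<bar>quantile \<mu> z\<bar> powr p"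
    by eventually_elim (use p in \<open>auto intro!: tendsto_powr2 tendsto_intros\<close>)
  have int: "(\<lambda>n. \<integral>z. \<bar>quantile (\<mu>s n) z\<bar> powr p \<partial>lborel_01) \<longlonglongrightarrow> (\<integral>z. \<bar>quantile \<mu> z\<bar> powr p \<partial>lborel_01)"
    using moment_tendsto_of_couplings[OF p \<pi> \<mu>s(1) \<mu>(1) cost]
    by (simp add: \<mu>.integral_quantile atomless_real_distribution.integral_quantile[OF \<mu>s'])
  let ?A = "{0<..<\<epsilon>} \<union> {1-\<epsilon><..<1}"
  have A: "?A \<in> sets lborel_01" "restrict_space lborel_01 ?A = restrict_space lborel ?A"
    using \<epsilon> by (auto simp: sets_restrict_space_iff intro!: restrict_space_lborel_01)
  have "(\<lambda>n. \<integral>z. \<bar>quantile (\<mu>s n) z\<bar> powr p \<partial>restrict_space lborel_01 ?A)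
      \<longlonglongrightarrow> (\<integral>z. \<bar>quantile \<mu> z\<bar> powr p \<partial>restrict_space lborel_01 ?A)"
    using \<mu>s(1) \<mu>(1)
    by (intro integral_restrict_space_tendsto_Scheffe[OF _ _ lim _ int A(1)]
        atomless_real_distribution.integrable_abs_quantile_powr[OF \<mu>s'] \<mu>.integrable_abs_quantile_powr) auto
  then show ?thesis
    unfolding A(2) \<mu>.tail_moment_eq_quantile[OF \<epsilon>] atomless_real_distribution.tail_moment_eq_quantile[OF \<mu>s' \<epsilon>] .
qed

theorem lemma4p8:
  fixes \<epsilon> p :: real
  assumes "0 < \<epsilon>" "\<epsilon> < 1/2" "1 \<le> p"
  shows
   "(\<forall>\<mu>s :: nat \<Rightarrow> real measure. tight \<mu>s \<and> (\<forall>n. atomless (\<mu>s n)) \<longrightarrow>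
        bdd_above (range (\<lambda>n. diameter (quantile_interval (\<mu>s n) \<epsilon>))) \<and>
        (\<forall>s\<in>{0<..<1}. bdd_above (range (\<lambda>n. \<bar>quantile (\<mu>s n) s\<bar>))))
    \<and> (\<forall>\<mu> \<nu>. Pp p \<mu> \<and> Pp p \<nu> \<and> atomless \<mu> \<and> atomless \<nu> \<longrightarrow>
        \<bar>tail_moment p \<epsilon> \<mu> powr (1/p) - tail_moment p \<epsilon> \<nu> powr (1/p)\<bar>
          \<le> (LINT z:({0<..<\<epsilon>} \<union> {1-\<epsilon><..<1})|lborel. \<bar>quantile \<mu> z - quantile \<nu> z\<bar> powr p) powr (1/p))
    \<and> (\<forall>(\<mu>s :: nat \<Rightarrow> real measure) \<mu>. (\<forall>n. Pp p (\<mu>s n) \<and> atomless (\<mu>s n)) \<and> Pp p \<mu> \<and> atomless \<mu> \<and>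
        (\<lambda>n. wasserstein p (\<mu>s n) \<mu>) \<longlonglongrightarrow> 0 \<longrightarrow>
        (\<lambda>n. tail_moment p \<epsilon> (\<mu>s n)) \<longlonglongrightarrow> tail_moment p \<epsilon> \<mu>)"
proof (intro conjI allI impI ballI)
  have \<epsilon>: "0 < \<epsilon>" "\<epsilon> < 1" using assms by auto
  fix \<mu>s :: "nat \<Rightarrow> real measure"
  assume "tight \<mu>s \<and> (\<forall>n. atomless (\<mu>s n))"
  \<comment> \<open>Part (i) does not need atomlessness.\<close>
  then have "tight \<mu>s" ..
  show "bdd_above (range (\<lambda>n. diameter (quantile_interval (\<mu>s n) \<epsilon>)))"
    by (rule tight_bdd_above_diameter_quantile_interval[OF \<open>tight \<mu>s\<close> \<epsilon>])
  show "bdd_above (range (\<lambda>n. \<bar>quantile (\<mu>s n) s\<bar>))" if "s \<in> {0<..<1}" for s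
    by (rule tight_bdd_above_abs_quantile[OF \<open>tight \<mu>s\<close> that])
next
  fix \<mu> \<nu> :: "real measure"
  assume "Pp p \<mu> \<and> Pp p \<nu> \<and> atomless \<mu> \<and> atomless \<nu>"
  then show "\<bar>tail_moment p \<epsilon> \<mu> powr (1/p) - tail_moment p \<epsilon> \<nu> powr (1/p)\<bar>
      \<le> (LINT z:({0<..<\<epsilon>} \<union> {1-\<epsilon><..<1})|lborel. \<bar>quantile \<mu> z - quantile \<nu> z\<bar> powr p) powr (1/p)"
    using assms by (intro tail_moment_root_diff_le) auto
next
  fix \<mu>s :: "nat \<Rightarrow> real measure" and \<mu>
  assume "(\<forall>n. Pp p (\<mu>s n) \<and> atomless (\<mu>s n)) \<and> Pp p \<mu> \<and> atomless \<mu> \<and>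
    (\<lambda>n. wasserstein p (\<mu>s n) \<mu>) \<longlonglongrightarrow> 0"
  then show "(\<lambda>n. tail_moment p \<epsilon> (\<mu>s n)) \<longlonglongrightarrow> tail_moment p \<epsilon> \<mu>"
    using assms by (intro tail_moment_tendsto_of_wasserstein) auto
qed

end
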